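(* Let $\Gamma$ be an infinite, connected, locally finite weighted graph, and let $X$ be a finite subset of its vertex set. Then the following are equivalent: (1) every function $f:X\to\mathbb{R}$ extends to a harmonic function on all of $\Gamma$; (2) there is no non-zero finitely supported function on $\Gamma$ that is harmonic on $\Gamma\setminus X$.
   Context: A weighted graph has undirected edges without loops or multiple edges, with weights $\omega_{xy}=\omega_{yx}>0$ and degrees $\deg x=\sum_{y\sim x}\omega_{xy}$. The Laplacian is $\Delta f(x)=f(x)-\frac{1}{\deg x}\sum_{y\sim x}\omega_{xy}f(y)$. A function $f$ is harmonic on a set $A$ of vertices if $\Delta f(x)=0$ for every $x\in A$, and harmonic if this holds for all vertices. *)

theory Defs
  imports Complex_Main
begin

definition weighted_graph :: "'a set \<Rightarrow> ('a \<Rightarrow> 'a \<Rightarrow> real) \<Rightarrow> bool" where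
  "weighted_graph V w \<longleftrightarrow>
     (\<forall>x y. w x y = w y x) \<and> (\<forall>x y. w x y \<ge> 0) \<and> (\<forall>x. w x x = 0) \<and>
     (\<forall>x y. w x y \<noteq> 0 \<longrightarrow> x \<in> V \<and> y \<in> V)"

definition adj :: "('a \<Rightarrow> 'a \<Rightarrow> real) \<Rightarrow> 'a \<Rightarrow> 'a \<Rightarrow> bool" where
  "adj w x y \<longleftrightarrow> w x y > 0"

definition nbrs :: "('a \<Rightarrow> 'a \<Rightarrow> real) \<Rightarrow> 'a \<Rightarrow> 'a set" where
  "nbrs w x = {y. adj w x y}"

definition locally_finite :: "'a set \<Rightarrow> ('a \<Rightarrow> 'a \<Rightarrow> real) \<Rightarrow> bool" where
  "locally_finite V w \<longleftrightarrow> (\<forall>x\<in>V. finite (nbrs w x))"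

definition connected_graph :: "'a set \<Rightarrow> ('a \<Rightarrow> 'a \<Rightarrow> real) \<Rightarrow> bool" where
  "connected_graph V w \<longleftrightarrow> (\<forall>x\<in>V. \<forall>y\<in>V. (x, y) \<in> {(u, v). adj w u v}\<^sup>*)"

definition deg :: "('a \<Rightarrow> 'a \<Rightarrow> real) \<Rightarrow> 'a \<Rightarrow> real" where
  "deg w x = (\<Sum>y\<in>nbrs w x. w x y)"

definition laplacian :: "('a \<Rightarrow> 'a \<Rightarrow> real) \<Rightarrow> ('a \<Rightarrow> real) \<Rightarrow> 'a \<Rightarrow> real" where
  "laplacian w f x = f x - (1 / deg w x) * (\<Sum>y\<in>nbrs w x. w x y * f y)"

definition harmonic_on :: "('a \<Rightarrow> 'a \<Rightarrow> real) \<Rightarrow> 'a set \<Rightarrow> ('a \<Rightarrow> real) \<Rightarrow> bool" where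
  "harmonic_on w A f \<longleftrightarrow> (\<forall>x\<in>A. laplacian w f x = 0)"

definition finitely_supported :: "'a set \<Rightarrow> ('a \<Rightarrow> real) \<Rightarrow> bool" where
  "finitely_supported V f \<longleftrightarrow> finite {x\<in>V. f x \<noteq> 0}"

end

theory Submission
  imports Defs "HOL-Library.Function_Algebras" "HOL-Library.Indicator_Function"
begin

text \<open>
  Write \<open>K u = deg \<cdot> \<Delta>u\<close> for the combinatorial Laplacian. On finitely supported functions
  \<open>K\<close> is symmetric for the pairing \<open>\<Sum> u g\<close>, and by the maximum principle a finitely supported
  function with \<open>K u = 0\<close> on an infinite connected graph vanishes.

  If every \<open>f : X \<rightarrow> \<real>\<close> extends harmonically, let \<open>u\<close> be finitely supported and harmonic off
  \<open>X\<close>, and let \<open>g\<close> be a harmonic extension of \<open>K u\<close> restricted to \<open>X\<close>. Symmetry gives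
  \<open>\<Sum>\<^sub>X (K u)\<^sup>2 = \<Sum> u \<cdot> K g = 0\<close>, so \<open>u\<close> is harmonic everywhere and hence zero.

  Conversely, the absence of such \<open>u\<close> says exactly that the image under \<open>K\<close> of the finitely supported
  functions meets the span of the point masses \<open>\<delta>\<^sub>x\<close>, \<open>x \<in> X\<close>, only in \<open>0\<close>. Hence some linear
  functional \<open>\<phi>\<close> on all functions kills that image and has \<open>\<phi> \<delta>\<^sub>x = f x\<close> on \<open>X\<close>; then
  \<open>g z = \<phi> \<delta>\<^sub>z\<close> is harmonic, because \<open>K g x = \<phi> (K \<delta>\<^sub>x) = 0\<close>.
\<close>

section \<open>The combinatorial Laplacian\<close>

lemma weighted_graph_nbrs_subset:
  assumes "weighted_graph V w" shows "nbrs w x \<subseteq> V"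
  using assms unfolding weighted_graph_def nbrs_def adj_def by (metis less_irrefl mem_Collect_eq subsetI)

lemma weighted_graph_nbrs_outside:
  assumes "weighted_graph V w" "x \<notin> V" shows "nbrs w x = {}"
  using assms unfolding weighted_graph_def nbrs_def adj_def by (metis empty_Collect_eq less_irrefl)

lemma weighted_graph_weight_eq_0:
  assumes "weighted_graph V w" "y \<notin> nbrs w x" shows "w x y = 0"
  using assms unfolding weighted_graph_def nbrs_def adj_def by (metis less_eq_real_def mem_Collect_eq)

lemma weighted_graph_nbrs_sym:
  assumes "weighted_graph V w" shows "y \<in> nbrs w x \<longleftrightarrow> x \<in> nbrs w y"
  using assms unfolding weighted_graph_def nbrs_def adj_def by auto

lemma locally_finite_finite_nbrs:
  assumes "weighted_graph V w" "locally_finite V w" shows "finite (nbrs w x)"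
  using assms weighted_graph_nbrs_outside[OF assms(1), of x]
  unfolding locally_finite_def by (cases "x \<in> V") auto

lemma deg_pos:
  assumes wg: "weighted_graph V w" and lf: "locally_finite V w" and con: "connected_graph V w"
    and "x \<in> V" "y \<in> V" "x \<noteq> y"
  shows "deg w x > 0"
proof -
  have "(x, y) \<in> {(u, v). adj w u v}\<^sup>*" using con assms(4,5) unfolding connected_graph_def by auto
  then obtain z where "adj w x z" using \<open>x \<noteq> y\<close> by (auto elim: converse_rtranclE)
  then have z: "z \<in> nbrs w x" "w x z > 0" unfolding nbrs_def adj_def by auto
  have "\<And>y. 0 \<le> w x y" using wg unfolding weighted_graph_def by auto
  then show ?thesis
    unfolding deg_def using sum_pos2[of "nbrs w x" z "w x"] locally_finite_finite_nbrs[OF wg lf] z by blast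
qed

lemma sum_nbrs_eq_sum_superset:
  assumes wg: "weighted_graph V w" and lf: "locally_finite V w" and "finite S"
    and "\<And>y. y \<in> nbrs w x \<Longrightarrow> h y \<noteq> 0 \<Longrightarrow> y \<in> S"
  shows "(\<Sum>y\<in>nbrs w x. w x y * h y) = (\<Sum>y\<in>S. w x y * h y)"
proof -
  have fin: "finite (nbrs w x)" using locally_finite_finite_nbrs[OF wg lf] .
  have "(\<Sum>y\<in>nbrs w x. w x y * h y) = (\<Sum>y\<in>nbrs w x \<union> S. w x y * h y)"
    by (rule sum.mono_neutral_left) (use fin assms(3) weighted_graph_weight_eq_0[OF wg] in auto)
  also have "\<dots> = (\<Sum>y\<in>S. w x y * h y)"
    by (rule sum.mono_neutral_right) (use fin assms(3,4) in auto)
  finally show ?thesis .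
qed

definition comb_laplacian :: "('a \<Rightarrow> 'a \<Rightarrow> real) \<Rightarrow> ('a \<Rightarrow> real) \<Rightarrow> 'a \<Rightarrow> real" where
  "comb_laplacian w u x = deg w x * u x - (\<Sum>y\<in>nbrs w x. w x y * u y)"

lemma comb_laplacian_add: "comb_laplacian w (u + v) x = comb_laplacian w u x + comb_laplacian w v x"
  unfolding comb_laplacian_def by (simp add: distrib_left sum.distrib)

lemma comb_laplacian_scale: "comb_laplacian w (\<lambda>y. c * u y) x = c * comb_laplacian w u x"
  unfolding comb_laplacian_def by (simp add: sum_distrib_left right_diff_distrib mult.left_commute)

lemma comb_laplacian_uminus: "comb_laplacian w (\<lambda>y. - u y) x = - comb_laplacian w u x"
  using comb_laplacian_scale[of w "-1" u x] by simp

lemma comb_laplacian_zero: "comb_laplacian w 0 x = 0"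
  by (simp add: comb_laplacian_def)

lemma harmonic_on_iff_comb_laplacian:
  assumes wg: "weighted_graph V w" and lf: "locally_finite V w" and "infinite V"
    and con: "connected_graph V w" and "A \<subseteq> V"
  shows "harmonic_on w A f \<longleftrightarrow> (\<forall>x\<in>A. comb_laplacian w f x = 0)"
proof -
  have "deg w x > 0" if "x \<in> A" for x
  proof -
    obtain y where "y \<in> V" "y \<noteq> x" using \<open>infinite V\<close> by (metis finite.simps insertCI subsetI finite_subset)
    then show ?thesis using deg_pos[OF wg lf con] that \<open>A \<subseteq> V\<close> by blast
  qed
  moreover have "comb_laplacian w f x = deg w x * laplacian w f x" if "deg w x > 0" for x
    unfolding comb_laplacian_def laplacian_def using that by (simp add: field_simps)
  ultimately show ?thesis unfolding harmonic_on_def by (metis less_irrefl mult_eq_0_iff)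
qed

section \<open>Maximum principle and Green's formula\<close>

lemma comb_laplacian_max_at_nbr:
  assumes wg: "weighted_graph V w" and lf: "locally_finite V w"
    and K: "comb_laplacian w u x = 0" and ux: "u x = M" and le: "\<And>y. y \<in> V \<Longrightarrow> u y \<le> M"
    and z: "z \<in> nbrs w x"
  shows "u z = M"
proof -
  have "(\<Sum>y\<in>nbrs w x. w x y * (M - u y)) = deg w x * M - (\<Sum>y\<in>nbrs w x. w x y * u y)"
    unfolding deg_def sum_distrib_right right_diff_distrib sum_subtractf ..
  also have "\<dots> = 0" using K ux unfolding comb_laplacian_def by simp
  finally have sum0: "(\<Sum>y\<in>nbrs w x. w x y * (M - u y)) = 0" .
  have "0 \<le> w x y * (M - u y)" if "y \<in> nbrs w x" for y
  proof (rule mult_nonneg_nonneg)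
    show "0 \<le> w x y" using wg unfolding weighted_graph_def by blast
    have "y \<in> V" using weighted_graph_nbrs_subset[OF wg] that by blast
    then show "0 \<le> M - u y" using le by simp
  qed
  then have "w x z * (M - u z) = 0"
    using sum_nonneg_eq_0_iff[OF locally_finite_finite_nbrs[OF wg lf], where f="\<lambda>y. w x y * (M - u y)"]
      sum0 z by simp
  moreover have "w x z > 0" using z unfolding nbrs_def adj_def by auto
  ultimately show ?thesis by simp
qed

text \<open>Maximum principle: a positive maximum would spread along paths to a vertex outside the
  (finite) support.\<close>

lemma finitely_supported_comb_harmonic_le_0:
  assumes wg: "weighted_graph V w" and lf: "locally_finite V w" and inf: "infinite V"
    and con: "connected_graph V w" and fs: "finitely_supported V u"
    and harm: "\<And>x. x \<in> V \<Longrightarrow> comb_laplacian w u x = 0" and "x \<in> V"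
  shows "u x \<le> 0"
proof (rule ccontr)
  define S where "S = {x\<in>V. u x \<noteq> 0}"
  define M where "M = Max (u ` S)"
  assume "\<not> u x \<le> 0"
  then have xS: "x \<in> S" using \<open>x \<in> V\<close> by (simp add: S_def)
  have fS: "finite S" using fs unfolding S_def finitely_supported_def .
  have "M \<ge> u x" unfolding M_def using fS xS by simp
  then have Mpos: "M > 0" using \<open>\<not> u x \<le> 0\<close> by simp
  have le: "u y \<le> M" if "y \<in> V" for y
    using Mpos fS that unfolding M_def S_def by (cases "u y = 0") auto
  have "M \<in> u ` S" unfolding M_def using fS xS by (intro Max_in) auto
  then obtain x1 where x1: "x1 \<in> V" "u x1 = M" unfolding S_def by auto
  obtain y where y: "y \<in> V" "u y = 0"
    using inf fS unfolding S_def by (metis (mono_tags, lifting) mem_Collect_eq subsetI finite_subset)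
  have "(x1, y) \<in> {(a, b). adj w a b}\<^sup>*" using con x1 y unfolding connected_graph_def by auto
  then have "y \<in> V \<and> u y = M"
  proof (induction rule: rtrancl_induct)
    case base then show ?case using x1 by simp
  next
    case (step b c)
    then have "c \<in> nbrs w b" unfolding nbrs_def by auto
    then show ?case
      using comb_laplacian_max_at_nbr[OF wg lf harm _ le] weighted_graph_nbrs_subset[OF wg] step
      by auto
  qed
  then show False using y Mpos by simp
qed

lemma finitely_supported_comb_harmonic_eq_0:
  assumes wg: "weighted_graph V w" and lf: "locally_finite V w" and inf: "infinite V"
    and con: "connected_graph V w" and fs: "finitely_supported V u"
    and harm: "\<And>x. x \<in> V \<Longrightarrow> comb_laplacian w u x = 0" and "x \<in> V"
  shows "u x = 0"
proof -
  have "finitely_supported V (\<lambda>y. - u y)" using fs by (simp add: finitely_supported_def)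
  then have "- u x \<le> 0"
    using finitely_supported_comb_harmonic_le_0[OF wg lf inf con, of "\<lambda>y. - u y"] harm \<open>x \<in> V\<close>
    by (simp add: comb_laplacian_uminus)
  then show ?thesis
    using finitely_supported_comb_harmonic_le_0[OF assms] by simp
qed

text \<open>As \<open>S\<close> contains the support of \<open>u\<close> and its neighbours, both sides
  expand to \<open>\<Sum>\<^sub>S deg \<cdot> u \<cdot> g - \<Sum>\<^sub>x\<^sub>,\<^sub>y\<^sub>\<in>\<^sub>S w x y \<cdot> u y \<cdot> g x\<close>, and \<open>w\<close> is symmetric.\<close>

lemma sum_comb_laplacian_symmetric:
  assumes wg: "weighted_graph V w" and lf: "locally_finite V w" and "finite S" and "S \<subseteq> V"
    and supp: "\<And>x. x \<in> V \<Longrightarrow> u x \<noteq> 0 \<Longrightarrow> x \<in> S \<and> nbrs w x \<subseteq> S"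
  shows "(\<Sum>x\<in>S. comb_laplacian w u x * g x) = (\<Sum>x\<in>S. u x * comb_laplacian w g x)"
proof -
  have sym: "\<And>x y. w x y = w y x" using wg unfolding weighted_graph_def by blast
  have u_nbrs: "(\<Sum>y\<in>nbrs w x. w x y * u y) = (\<Sum>y\<in>S. w x y * u y)" for x
    using sum_nbrs_eq_sum_superset[OF wg lf \<open>finite S\<close>] supp weighted_graph_nbrs_subset[OF wg]
    by blast
  have g_nbrs: "u x * (\<Sum>y\<in>nbrs w x. w x y * g y) = u x * (\<Sum>y\<in>S. w x y * g y)" if "x \<in> S" for x
    using sum_nbrs_eq_sum_superset[OF wg lf \<open>finite S\<close>, of x g] supp[of x] that \<open>S \<subseteq> V\<close>
    by (cases "u x = 0") auto
  have "(\<Sum>x\<in>S. (\<Sum>y\<in>S. w x y * u y) * g x) = (\<Sum>x\<in>S. \<Sum>y\<in>S. w x y * u y * g x)"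
    by (simp add: sum_distrib_right)
  also have "\<dots> = (\<Sum>y\<in>S. \<Sum>x\<in>S. w x y * u y * g x)"
    by (rule sum.swap)
  also have "\<dots> = (\<Sum>x\<in>S. u x * (\<Sum>y\<in>S. w x y * g y))"
    by (simp add: sum_distrib_left sym mult.assoc mult.left_commute)
  finally have swap: "(\<Sum>x\<in>S. (\<Sum>y\<in>S. w x y * u y) * g x) = (\<Sum>x\<in>S. u x * (\<Sum>y\<in>S. w x y * g y))" .
  have "(\<Sum>x\<in>S. comb_laplacian w u x * g x)
      = (\<Sum>x\<in>S. deg w x * u x * g x) - (\<Sum>x\<in>S. (\<Sum>y\<in>S. w x y * u y) * g x)"
    unfolding comb_laplacian_def u_nbrs by (simp add: left_diff_distrib sum_subtractf)
  also have "\<dots> = (\<Sum>x\<in>S. u x * (deg w x * g x - (\<Sum>y\<in>S. w x y * g y)))"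
    unfolding swap by (simp add: right_diff_distrib sum_subtractf mult.assoc mult.left_commute)
  also have "\<dots> = (\<Sum>x\<in>S. u x * comb_laplacian w g x)"
    by (rule sum.cong) (simp_all add: comb_laplacian_def right_diff_distrib g_nbrs)
  finally show ?thesis .
qed

section \<open>Linear functionals on the space of functions\<close>

lemma (in vector_space) independent_Un:
  assumes A: "independent A" and B: "independent B" and AB: "span A \<inter> span B \<subseteq> {0}"
  shows "independent (A \<union> B)"
  unfolding independent_explicit_finite_subsets
proof (intro allI impI ballI)
  fix S u v
  assume S: "S \<subseteq> A \<union> B" "finite S" and sum0: "(\<Sum>v\<in>S. u v *s v) = 0" and "v \<in> S"
  let ?a = "\<Sum>v\<in>S \<inter> A. u v *s v" and ?b = "\<Sum>v\<in>S - A. u v *s v"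
  have "(\<Sum>v\<in>S. u v *s v) = ?a + ?b" using S by (intro sum.Int_Diff) blast
  then have "?a + ?b = 0" using sum0 by simp
  have "?a \<in> span A" "?b \<in> span B"
    by (intro span_sum span_scale span_base; use S in blast)+
  have "?a = - ?b" using \<open>?a + ?b = 0\<close> by (simp add: eq_neg_iff_add_eq_0)
  then have "?a \<in> span B" using span_neg[OF \<open>?b \<in> span B\<close>] by simp
  then have "?a = 0" using \<open>?a \<in> span A\<close> AB by blast
  then have "?b = 0" using \<open>?a + ?b = 0\<close> by simp
  show "u v = 0"
  proof (cases "v \<in> A")
    case True
    then show ?thesis using independentD[OF A _ _ \<open>?a = 0\<close>] S \<open>v \<in> S\<close> by blast
  next
    case False
    then show ?thesis using independentD[OF B _ _ \<open>?b = 0\<close>] S \<open>v \<in> S\<close> by blast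
  qed
qed

lemma (in vector_space_pair) linear_exists_vanishing_on_span:
  assumes B: "vs1.independent B" and EB: "vs1.span E \<inter> vs1.span B \<subseteq> {0}"
  obtains \<phi> where "Vector_Spaces.linear s1 s2 \<phi>" "\<And>b. b \<in> B \<Longrightarrow> \<phi> b = h b"
    "\<And>v. v \<in> vs1.span E \<Longrightarrow> \<phi> v = 0"
proof -
  obtain C where "C \<subseteq> E" and C: "vs1.independent C" and "E \<subseteq> vs1.span C"
    using vs1.maximal_independent_subset[of E] by blast
  have "vs1.span C \<subseteq> vs1.span E"
    using \<open>C \<subseteq> E\<close> by (rule vs1.span_mono)
  then have CB: "vs1.independent (C \<union> B)"
    using vs1.independent_Un[OF C B] EB by blast
  have "b \<notin> C" if "b \<in> B" for b
  proof
    assume "b \<in> C"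
    then have "b = 0"
      using EB \<open>vs1.span C \<subseteq> _\<close> that vs1.span_base by blast
    then show False using B that vs1.dependent_zero by blast
  qed
  let ?\<phi> = "construct (C \<union> B) (\<lambda>b. if b \<in> C then 0 else h b)"
  show thesis
  proof
    show "Vector_Spaces.linear s1 s2 ?\<phi>" by (rule linear_construct[OF CB])
    show "?\<phi> b = h b" if "b \<in> B" for b
      using construct_basis[OF CB] \<open>b \<in> B \<Longrightarrow> b \<notin> C\<close> that by simp
    show "?\<phi> v = 0" if "v \<in> vs1.span E" for v
    proof (rule linear_eq_0_on_span[OF linear_construct[OF CB]])
      show "v \<in> vs1.span C"
        using that \<open>E \<subseteq> _\<close> vs1.span_minimal[OF _ vs1.subspace_span] by blast
    qed (simp add: construct_basis[OF CB])
  qed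
qed

text \<open>Function_Algebras supplies only the pointwise group structure on \<open>'a \<Rightarrow> real\<close>; the scalar
  multiplication making all real functions on the vertices a vector space is defined here.\<close>

definition scale_fun :: "real \<Rightarrow> ('a \<Rightarrow> real) \<Rightarrow> 'a \<Rightarrow> real" where
  "scale_fun c f = (\<lambda>x. c * f x)"

lemma scale_fun_apply [simp]: "scale_fun c f x = c * f x"
  by (simp add: scale_fun_def)

interpretation fun_space: vector_space "scale_fun :: real \<Rightarrow> ('a \<Rightarrow> real) \<Rightarrow> _"
  by unfold_locales (simp_all add: fun_eq_iff algebra_simps)

interpretation functional: vector_space_pair "scale_fun :: real \<Rightarrow> ('a \<Rightarrow> real) \<Rightarrow> _" "(*)"
  by unfold_locales (simp_all add: algebra_simps)

definition finsupp_on :: "'a set \<Rightarrow> ('a \<Rightarrow> real) set" where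
  "finsupp_on Y = {u. finite {x. u x \<noteq> 0} \<and> {x. u x \<noteq> 0} \<subseteq> Y}"

lemma subspace_finsupp_on: "fun_space.subspace (finsupp_on Y)"
proof (rule fun_space.subspaceI)
  fix u v assume "u \<in> finsupp_on Y" "v \<in> finsupp_on Y"
  moreover have "{x. (u + v) x \<noteq> 0} \<subseteq> {x. u x \<noteq> 0} \<union> {x. v x \<noteq> 0}" by auto
  ultimately show "u + v \<in> finsupp_on Y" unfolding finsupp_on_def by (auto intro: finite_subset)
next
  fix c u assume "u \<in> finsupp_on Y"
  moreover have "{x. scale_fun c u x \<noteq> 0} \<subseteq> {x. u x \<noteq> 0}" by auto
  ultimately show "scale_fun c u \<in> finsupp_on Y" unfolding finsupp_on_def by (auto intro: finite_subset)
qed (simp add: finsupp_on_def)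

lemma indicator_in_finsupp_on:
  assumes "x \<in> Y" shows "indicator {x} \<in> finsupp_on Y"
proof -
  have "{z. indicator {x} z \<noteq> (0::real)} = {x}" by (auto simp: indicator_def)
  then show ?thesis using assms by (simp add: finsupp_on_def)
qed

lemma span_indicators_subset: "fun_space.span ((\<lambda>x. indicator {x}) ` Y) \<subseteq> finsupp_on Y"
  by (rule fun_space.span_minimal) (auto simp: indicator_in_finsupp_on subspace_finsupp_on)

lemma sum_fun_apply: "(\<Sum>i\<in>A. f i) x = (\<Sum>i\<in>A. f i x)"
  by (induction A rule: infinite_finite_induct) auto

lemma indicator_singleton_eq_iff: "(indicator {a} :: 'a \<Rightarrow> real) = indicator {b} \<longleftrightarrow> a = b"
  by (metis indicator_simps singletonD singletonI zero_neq_one)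

lemma independent_indicators: "fun_space.independent ((\<lambda>x. indicator {x} :: 'a \<Rightarrow> real) ` Y)"
  unfolding fun_space.independent_explicit_finite_subsets
proof (intro allI impI ballI)
  fix S c v
  assume S: "S \<subseteq> (\<lambda>x. indicator {x}) ` Y" "finite S"
    and sum0: "(\<Sum>v\<in>S. scale_fun (c v) v) = 0" and "v \<in> S"
  then obtain y where y: "v = indicator {y}" by blast
  have "0 = (\<Sum>v'\<in>S. scale_fun (c v') v') y" using sum0 by simp
  also have "\<dots> = (\<Sum>v'\<in>S. if v' = v then c v' else 0)"
    unfolding sum_fun_apply
  proof (rule sum.cong)
    fix v' assume "v' \<in> S"
    then obtain y' where "v' = indicator {y'}" using S by blast
    then show "scale_fun (c v') v' y = (if v' = v then c v' else 0)"
      using y indicator_singleton_eq_iff[of y' y] by auto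
  qed simp
  also have "\<dots> = c v" using S(2) \<open>v \<in> S\<close> by simp
  finally show "c v = 0" by simp
qed

lemma comb_laplacian_indicator:
  assumes wg: "weighted_graph V w" and lf: "locally_finite V w"
  shows "comb_laplacian w (indicator {x})
    = scale_fun (deg w x) (indicator {x}) - (\<Sum>y\<in>nbrs w x. scale_fun (w x y) (indicator {y}))"
proof
  fix z
  have fin: "finite (nbrs w a)" for a using locally_finite_finite_nbrs[OF wg lf] .
  have "(\<Sum>y\<in>nbrs w z. w z y * indicator {x} y) = (if x \<in> nbrs w z then w z x else 0)"
    using fin by (simp add: indicator_def if_distrib sum.delta' cong: if_cong)
  moreover have "(\<Sum>y\<in>nbrs w x. scale_fun (w x y) (indicator {y})) z = (if z \<in> nbrs w x then w x z else 0)"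
    using fin by (simp add: sum_fun_apply indicator_def if_distrib sum.delta cong: if_cong)
  moreover have "x \<in> nbrs w z \<longleftrightarrow> z \<in> nbrs w x" "w z x = w x z"
    using wg weighted_graph_nbrs_sym[OF wg] unfolding weighted_graph_def by auto
  ultimately show "comb_laplacian w (indicator {x}) z
      = (scale_fun (deg w x) (indicator {x}) - (\<Sum>y\<in>nbrs w x. scale_fun (w x y) (indicator {y}))) z"
    unfolding comb_laplacian_def by (auto simp: indicator_def)
qed

lemma comb_laplacian_linear_image:
  assumes wg: "weighted_graph V w" and lf: "locally_finite V w"
    and lin: "Vector_Spaces.linear scale_fun (*) \<phi>"
  shows "comb_laplacian w (\<lambda>z. \<phi> (indicator {z})) x = \<phi> (comb_laplacian w (indicator {x}))"
  unfolding comb_laplacian_indicator[OF wg lf] comb_laplacian_def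
  by (simp add: functional.linear_diff[OF lin] functional.linear_sum[OF lin]
      functional.linear_scale[OF lin])

lemma subspace_comb_laplacian_image: "fun_space.subspace (comb_laplacian w ` finsupp_on Y)"
proof (rule fun_space.subspaceI)
  show "0 \<in> comb_laplacian w ` finsupp_on Y"
  proof
    show "0 = comb_laplacian w 0" by (simp add: fun_eq_iff comb_laplacian_zero)
  qed (simp add: finsupp_on_def)
next
  fix a b assume "a \<in> comb_laplacian w ` finsupp_on Y" "b \<in> comb_laplacian w ` finsupp_on Y"
  then obtain u v where uv: "u \<in> finsupp_on Y" "v \<in> finsupp_on Y"
    and "a = comb_laplacian w u" "b = comb_laplacian w v" by blast
  then show "a + b \<in> comb_laplacian w ` finsupp_on Y"
  proof (intro image_eqI)
    show "a + b = comb_laplacian w (u + v)"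
      using \<open>a = _\<close> \<open>b = _\<close> by (simp add: fun_eq_iff comb_laplacian_add)
  qed (rule fun_space.subspace_add[OF subspace_finsupp_on uv])
next
  fix c a assume "a \<in> comb_laplacian w ` finsupp_on Y"
  then obtain u where u: "u \<in> finsupp_on Y" and "a = comb_laplacian w u" by blast
  then show "scale_fun c a \<in> comb_laplacian w ` finsupp_on Y"
  proof (intro image_eqI)
    show "scale_fun c a = comb_laplacian w (scale_fun c u)"
      using \<open>a = _\<close> by (simp add: fun_eq_iff scale_fun_def comb_laplacian_scale)
  qed (rule fun_space.subspace_scale[OF subspace_finsupp_on u])
qed

lemma extendable_imp_finitely_supported_harmonic_eq_0:
  assumes wg: "weighted_graph V w" and inf: "infinite V" and con: "connected_graph V w"
    and lf: "locally_finite V w" and "finite X" and "X \<subseteq> V"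
    and ext: "\<forall>f :: 'a \<Rightarrow> real. \<exists>g. (\<forall>x\<in>X. g x = f x) \<and> harmonic_on w V g"
    and fs: "finitely_supported V u" and hu: "harmonic_on w (V - X) u" and "x \<in> V"
  shows "u x = 0"
proof -
  note harmonic_iff = harmonic_on_iff_comb_laplacian[OF wg lf inf con]
  define supp where "supp = {x\<in>V. u x \<noteq> 0}"
  define S where "S = supp \<union> (\<Union>x\<in>supp. nbrs w x) \<union> X"
  have "finite S" using fs \<open>finite X\<close> locally_finite_finite_nbrs[OF wg lf]
    unfolding S_def supp_def finitely_supported_def by auto
  have "S \<subseteq> V" unfolding S_def supp_def using \<open>X \<subseteq> V\<close> weighted_graph_nbrs_subset[OF wg] by blast
  have Ku: "comb_laplacian w u x = 0" if "x \<in> V - X" for x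
    using hu harmonic_iff[of "V - X"] that by blast
  obtain g where gX: "\<forall>x\<in>X. g x = comb_laplacian w u x" and "harmonic_on w V g"
    using ext by blast
  then have Kg: "comb_laplacian w g x = 0" if "x \<in> V" for x
    using harmonic_iff[of V] that by blast
  have "(\<Sum>x\<in>S. (comb_laplacian w u x)\<^sup>2) = (\<Sum>x\<in>S. comb_laplacian w u x * g x)"
  proof (rule sum.cong)
    fix x assume "x \<in> S"
    then show "(comb_laplacian w u x)\<^sup>2 = comb_laplacian w u x * g x"
      using gX Ku \<open>S \<subseteq> V\<close> by (cases "x \<in> X") (auto simp: power2_eq_square)
  qed simp
  also have "\<dots> = (\<Sum>x\<in>S. u x * comb_laplacian w g x)"
    by (rule sum_comb_laplacian_symmetric[OF wg lf \<open>finite S\<close> \<open>S \<subseteq> V\<close>])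
      (auto simp: S_def supp_def)
  also have "\<dots> = 0" by (rule sum.neutral) (use Kg \<open>S \<subseteq> V\<close> in auto)
  finally have "\<forall>x\<in>S. comb_laplacian w u x = 0"
    using sum_nonneg_eq_0_iff[OF \<open>finite S\<close>, of "\<lambda>x. (comb_laplacian w u x)\<^sup>2"] by simp
  then have "comb_laplacian w u x = 0" if "x \<in> V" for x
    using Ku that unfolding S_def by blast
  then show ?thesis
    using finitely_supported_comb_harmonic_eq_0[OF wg lf inf con fs] \<open>x \<in> V\<close> by blast
qed

lemma span_comb_laplacian_indicators_Int:
  assumes wg: "weighted_graph V w" and inf: "infinite V" and con: "connected_graph V w"
    and lf: "locally_finite V w"
    and no_harm: "\<not> (\<exists>u. finitely_supported V u \<and> (\<exists>x\<in>V. u x \<noteq> 0) \<and> harmonic_on w (V - X) u)"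
  shows "fun_space.span ((\<lambda>x. comb_laplacian w (indicator {x})) ` V)
    \<inter> fun_space.span ((\<lambda>x. indicator {x}) ` X) \<subseteq> {0}"
proof
  fix v
  assume v: "v \<in> fun_space.span ((\<lambda>x. comb_laplacian w (indicator {x})) ` V)
    \<inter> fun_space.span ((\<lambda>x. indicator {x}) ` X)"
  have "fun_space.span ((\<lambda>x. comb_laplacian w (indicator {x})) ` V) \<subseteq> comb_laplacian w ` finsupp_on V"
    by (rule fun_space.span_minimal)
      (auto simp: subspace_comb_laplacian_image indicator_in_finsupp_on)
  then obtain u where u: "u \<in> finsupp_on V" "v = comb_laplacian w u" and "v \<in> finsupp_on X"
    using v span_indicators_subset[of X] by blast
  then have "harmonic_on w (V - X) u"
    unfolding harmonic_on_iff_comb_laplacian[OF wg lf inf con Diff_subset] finsupp_on_def by auto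
  moreover have "finitely_supported V u"
    using u(1) unfolding finsupp_on_def finitely_supported_def by (auto intro: finite_subset)
  ultimately have "u = 0"
    using no_harm u(1) unfolding finsupp_on_def by (auto simp: fun_eq_iff)
  then have "v = comb_laplacian w 0" using u(2) by simp
  then show "v \<in> {0}" by (simp add: fun_eq_iff comb_laplacian_zero)
qed

lemma no_finitely_supported_harmonic_imp_extendable:
  assumes wg: "weighted_graph V w" and inf: "infinite V" and con: "connected_graph V w"
    and lf: "locally_finite V w"
    and no_harm: "\<not> (\<exists>u. finitely_supported V u \<and> (\<exists>x\<in>V. u x \<noteq> 0) \<and> harmonic_on w (V - X) u)"
  shows "\<exists>g. (\<forall>x\<in>X. g x = f x) \<and> harmonic_on w V g"
proof -
  obtain \<phi> where lin: "Vector_Spaces.linear scale_fun (*) \<phi>"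
    and \<phi>_indicator: "\<And>b. b \<in> (\<lambda>x. indicator {x}) ` X \<Longrightarrow> \<phi> b = f (THE x. b = indicator {x})"
    and \<phi>_vanishes: "\<And>v. v \<in> fun_space.span ((\<lambda>x. comb_laplacian w (indicator {x})) ` V) \<Longrightarrow> \<phi> v = 0"
    using functional.linear_exists_vanishing_on_span[OF independent_indicators
        span_comb_laplacian_indicators_Int[OF assms],
        where h="\<lambda>b. f (THE x. b = indicator {x})"] by blast
  define g where "g z = \<phi> (indicator {z})" for z
  have "g x = f x" if "x \<in> X" for x
    unfolding g_def using \<phi>_indicator[of "indicator {x}"] that
    by (simp add: indicator_singleton_eq_iff)
  moreover have "comb_laplacian w g x = 0" if "x \<in> V" for x
    unfolding g_def comb_laplacian_linear_image[OF wg lf lin]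
    using that by (intro \<phi>_vanishes fun_space.span_base) blast
  ultimately show ?thesis
    using harmonic_on_iff_comb_laplacian[OF wg lf inf con order_refl] by blast
qed

theorem proposition5p1:
  fixes V :: "'a set" and w :: "'a \<Rightarrow> 'a \<Rightarrow> real" and X :: "'a set"
  assumes "weighted_graph V w"
    and "infinite V"
    and "connected_graph V w"
    and "locally_finite V w"
    and "finite X" and "X \<subseteq> V"
  shows "(\<forall>f :: 'a \<Rightarrow> real. \<exists>g. (\<forall>x\<in>X. g x = f x) \<and> harmonic_on w V g)
     \<longleftrightarrow> \<not> (\<exists>u. finitely_supported V u \<and> (\<exists>x\<in>V. u x \<noteq> 0) \<and> harmonic_on w (V - X) u)"
proof
  assume "\<forall>f :: 'a \<Rightarrow> real. \<exists>g. (\<forall>x\<in>X. g x = f x) \<and> harmonic_on w V g"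
  then show "\<not> (\<exists>u. finitely_supported V u \<and> (\<exists>x\<in>V. u x \<noteq> 0) \<and> harmonic_on w (V - X) u)"
    using extendable_imp_finitely_supported_harmonic_eq_0[OF assms] by blast
next
  assume "\<not> (\<exists>u. finitely_supported V u \<and> (\<exists>x\<in>V. u x \<noteq> 0) \<and> harmonic_on w (V - X) u)"
  then show "\<forall>f :: 'a \<Rightarrow> real. \<exists>g. (\<forall>x\<in>X. g x = f x) \<and> harmonic_on w V g"
    using no_finitely_supported_harmonic_imp_extendable[OF assms(1-4)] by blast
qed

end
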